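(* Let $A^*\in\mathbb C^{N\times n}$ be isometric ($AA^*=I_n$), $x_0\in\mathbb C^n$, $b=|A^*x_0|$, and let $\mathcal X$ be one of $\mathbb C^n,\mathbb R^n,\mathbb R^n_+$. Let $x_*$ be a fixed point of AP in the sense that there is $u\in\mathbb C^N$ with $|u(j)|=1$ for all $j$ and $u(j)=1$ whenever $(A^*x_* )(j)\ne0$, such that $x_*=\big[A\big(b\odot u\odot\frac{A^*x_*}{|A^*x_*|}\big)\big]_{\mathcal X}$. Then $\|x_*\|\le\|b\|$, and if $\|x_*\|=\|b\|$ then $x_*\in\mathcal X$ and $|A^*x_*|=b$ (i.e. $x_*$ solves the phase retrieval problem). Equivalently, if $x_*$ is not a phase retrieval solution then $\|x_*\|<\|b\|$.
   Context: $|y|$ is the componentwise modulus, $\odot$ the componentwise product, $y/|y|$ the componentwise quotient with convention $y(j)/|y(j)|:=1$ when $y(j)=0$; $[\cdot]_{\mathcal X}$ is the Euclidean projection onto the closed convex set $\mathcal X$. *)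

theory Defs
  imports "HOL-Analysis.Analysis"
begin

definition cadj :: "complex^'n^'m \<Rightarrow> complex^'m^'n" where
  "cadj A = (\<chi> i j. cnj (A $ j $ i))"

definition phase :: "complex \<Rightarrow> complex" where
  "phase z = (if z = 0 then 1 else z / complex_of_real (cmod z))"

definition cabs_vec :: "complex^'n \<Rightarrow> real^'n" where
  "cabs_vec y = (\<chi> j. cmod (y $ j))"

definition real_vecs :: "(complex^'n) set" where
  "real_vecs = {x. \<forall>i. x $ i \<in> \<real>}"

definition nonneg_vecs :: "(complex^'n) set" where
  "nonneg_vecs = {x. \<forall>i. x $ i \<in> \<real> \<and> Re (x $ i) \<ge> 0}"

end

theory Submission imports Defs begin

text \<open>
  Put \<open>v = b \<odot> u \<odot> A\<^sup>*x\<^sub>*/|A\<^sup>*x\<^sub>*|\<close>, so that \<open>|v| = b\<close> and \<open>x\<^sub>* = [Av]\<^sub>\<X>\<close>.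
  Since \<open>A\<^sup>*\<close> is an isometry, \<open>\<parallel>v - A\<^sup>*Av\<parallel>\<^sup>2 = \<parallel>v\<parallel>\<^sup>2 - \<parallel>Av\<parallel>\<^sup>2\<close>, and since \<open>\<X>\<close> is closed,
  convex and contains 0, \<open>\<parallel>[w]\<^sub>\<X>\<parallel>\<^sup>2 + \<parallel>w - [w]\<^sub>\<X>\<parallel>\<^sup>2 \<le> \<parallel>w\<parallel>\<^sup>2\<close>. Hence
  \<open>\<parallel>x\<^sub>*\<parallel> \<le> \<parallel>Av\<parallel> \<le> \<parallel>v\<parallel> = \<parallel>b\<parallel>\<close>, and equality throughout forces \<open>x\<^sub>* = Av\<close> and
  \<open>v = A\<^sup>*Av = A\<^sup>*x\<^sub>*\<close>, i.e. \<open>|A\<^sup>*x\<^sub>*| = b\<close>.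
\<close>

lemma inner_complex_eq_Re_cnj: "inner (z::complex) w = Re (z * cnj w)"
  by (simp add: inner_complex_def)

lemma inner_matrix_vector_mult_cadj:
  fixes A :: "complex^'N^'n" and v :: "complex^'N" and y :: "complex^'n"
  shows "inner (A *v v) y = inner v (cadj A *v y)"
proof -
  have "inner (A *v v) y = (\<Sum>i\<in>UNIV. \<Sum>j\<in>UNIV. Re (A$i$j * v$j * cnj (y$i)))"
    by (simp add: inner_vec_def inner_complex_eq_Re_cnj matrix_vector_mult_def
        sum_distrib_right Re_sum)
  also have "\<dots> = (\<Sum>j\<in>UNIV. \<Sum>i\<in>UNIV. Re (A$i$j * v$j * cnj (y$i)))"
    by (rule sum.swap)
  also have "\<dots> = inner v (cadj A *v y)"
    by (simp add: inner_vec_def inner_complex_eq_Re_cnj matrix_vector_mult_def cadj_def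
        sum_distrib_left Re_sum cnj_sum mult_ac)
  finally show ?thesis .
qed

lemma norm_cadj_mult_vec:
  fixes A :: "complex^'N^'n"
  assumes "A ** cadj A = mat 1"
  shows "norm (cadj A *v y) = norm y"
proof -
  have "inner (cadj A *v y) (cadj A *v y) = inner (A *v (cadj A *v y)) y"
    by (simp add: inner_matrix_vector_mult_cadj)
  also have "\<dots> = inner y y"
    by (simp add: matrix_vector_mul_assoc assms)
  finally show ?thesis
    by (simp add: norm_eq_sqrt_inner)
qed

lemma norm_diff_cadj_mult_vec_square:
  fixes A :: "complex^'N^'n"
  assumes "A ** cadj A = mat 1"
  shows "(norm (v - cadj A *v (A *v v)))\<^sup>2 = (norm v)\<^sup>2 - (norm (A *v v))\<^sup>2"
proof -
  have "inner v (cadj A *v (A *v v)) = (norm (A *v v))\<^sup>2"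
    by (simp add: inner_matrix_vector_mult_cadj[symmetric] power2_norm_eq_inner inner_commute)
  moreover have "inner (cadj A *v (A *v v)) (cadj A *v (A *v v)) = inner (A *v v) (A *v v)"
    using norm_cadj_mult_vec[OF assms, of "A *v v"] by (metis power2_norm_eq_inner)
  ultimately show ?thesis
    by (simp add: power2_norm_eq_inner inner_diff_left inner_diff_right inner_commute)
qed

lemma norm_mult_vec_le_coisometry:
  fixes A :: "complex^'N^'n"
  assumes "A ** cadj A = mat 1"
  shows "norm (A *v v) \<le> norm v"
proof -
  have "(norm (A *v v))\<^sup>2 \<le> (norm v)\<^sup>2"
    using norm_diff_cadj_mult_vec_square[OF assms, of v]
      zero_le_power2[of "norm (v - cadj A *v (A *v v))"] by linarith
  thus ?thesis by (rule power2_le_imp_le) simp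
qed

lemma cadj_mult_vec_eq_if_norm_eq:
  fixes A :: "complex^'N^'n"
  assumes "A ** cadj A = mat 1" and "norm (A *v v) = norm v"
  shows "cadj A *v (A *v v) = v"
proof -
  have "(norm (v - cadj A *v (A *v v)))\<^sup>2 = 0"
    using norm_diff_cadj_mult_vec_square[OF assms(1), of v] assms(2) by (simp only: diff_self)
  thus ?thesis by simp
qed

lemma closest_point_pythagoras_le:
  fixes w :: "'a::euclidean_space"
  assumes "convex S" "closed S" "0 \<in> S"
  shows "(norm (closest_point S w))\<^sup>2 + (norm (w - closest_point S w))\<^sup>2 \<le> (norm w)\<^sup>2"
proof -
  let ?p = "closest_point S w"
  have "inner (w - ?p) (0 - ?p) \<le> 0"
    by (rule closest_point_dot[OF assms])
  hence "inner (w - ?p) ?p \<ge> 0"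
    by (simp add: inner_minus_right)
  moreover have "(norm w)\<^sup>2 = (norm ?p)\<^sup>2 + 2 * inner (w - ?p) ?p + (norm (w - ?p))\<^sup>2"
    using dot_norm[of ?p "w - ?p"] by (simp add: inner_commute)
  ultimately show ?thesis by linarith
qed

lemma norm_closest_point_le:
  fixes w :: "'a::euclidean_space"
  assumes "convex S" "closed S" "0 \<in> S"
  shows "norm (closest_point S w) \<le> norm w"
proof -
  have "(norm (closest_point S w))\<^sup>2 \<le> (norm w)\<^sup>2"
    using closest_point_pythagoras_le[OF assms, of w]
      zero_le_power2[of "norm (w - closest_point S w)"] by linarith
  thus ?thesis by (rule power2_le_imp_le) simp
qed

lemma closest_point_eq_if_norm_eq:
  fixes w :: "'a::euclidean_space"
  assumes "convex S" "closed S" "0 \<in> S" and "norm (closest_point S w) = norm w"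
  shows "closest_point S w = w"
  using closest_point_pythagoras_le[OF assms(1-3), of w] assms(4) by simp

lemma closed_real_vecs: "closed (real_vecs :: (complex^'n) set)"
proof -
  have "real_vecs = (\<Inter>i. {x::complex^'n. Im (x$i) = 0})"
    by (auto simp: real_vecs_def complex_is_Real_iff)
  moreover have "closed {x::complex^'n. Im (x$i) = 0}" for i
    by (intro closed_Collect_eq continuous_intros)
  ultimately show ?thesis by (metis closed_INT)
qed

lemma closed_nonneg_vecs: "closed (nonneg_vecs :: (complex^'n) set)"
proof -
  have "nonneg_vecs = real_vecs \<inter> (\<Inter>i. {x::complex^'n. 0 \<le> Re (x$i)})"
    by (auto simp: nonneg_vecs_def real_vecs_def)
  moreover have "closed {x::complex^'n. 0 \<le> Re (x$i)}" for i
    by (intro closed_Collect_le continuous_intros)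
  ultimately show ?thesis
    using closed_real_vecs by (metis closed_INT closed_Int)
qed

lemma convex_real_vecs: "convex (real_vecs :: (complex^'n) set)"
  unfolding convex_def real_vecs_def by (auto simp: complex_is_Real_iff)

lemma convex_nonneg_vecs: "convex (nonneg_vecs :: (complex^'n) set)"
  unfolding convex_def nonneg_vecs_def by (auto simp: complex_is_Real_iff)

lemma norm_cabs_vec: "norm (cabs_vec y) = norm y"
  by (simp add: norm_vec_def cabs_vec_def)

lemma norm_phase: "cmod (phase z) = 1"
  by (simp add: phase_def norm_divide)

theorem mainTheorem4:
  fixes A :: "complex^'N^'n" and x0 xs :: "complex^'n"
    and u :: "complex^'N" and b :: "real^'N" and X :: "(complex^'n) set"
  assumes iso: "A ** cadj A = mat 1"
    and b_def: "b = cabs_vec (cadj A *v x0)"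
    and X_choice: "X = UNIV \<or> X = real_vecs \<or> X = nonneg_vecs"
    and u_unit: "\<forall>j. cmod (u $ j) = 1"
    and u_one: "\<forall>j. (cadj A *v xs) $ j \<noteq> 0 \<longrightarrow> u $ j = 1"
    and fixp: "xs = closest_point X
               (A *v (\<chi> j. complex_of_real (b $ j) * u $ j * phase ((cadj A *v xs) $ j)))"
  shows "norm xs \<le> norm b \<and>
         (norm xs = norm b \<longrightarrow> xs \<in> X \<and> cabs_vec (cadj A *v xs) = b)"
proof -
  define v where "v = (\<chi> j. complex_of_real (b $ j) * u $ j * phase ((cadj A *v xs) $ j))"
  have xs_proj: "xs = closest_point X (A *v v)"
    using fixp by (simp add: v_def)
  have X: "convex X" "closed X" "0 \<in> X"
    using X_choice closed_real_vecs convex_real_vecs closed_nonneg_vecs convex_nonneg_vecs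
    by (auto simp: real_vecs_def nonneg_vecs_def)
  have abs_v: "cabs_vec v = b"
    using u_unit by (simp add: b_def v_def cabs_vec_def vec_eq_iff norm_mult norm_phase)
  have xs_le: "norm xs \<le> norm (A *v v)"
    using norm_closest_point_le[OF X] xs_proj by simp
  have Av_le: "norm (A *v v) \<le> norm b"
    using norm_mult_vec_le_coisometry[OF iso, of v] abs_v norm_cabs_vec[of v] by simp
  show ?thesis
  proof (intro conjI impI)
    show "norm xs \<le> norm b" using xs_le Av_le by simp
    show "xs \<in> X" using xs_proj closest_point_in_set[OF X(2)] X(3) by blast
    assume "norm xs = norm b"
    hence "xs = A *v v" and "norm (A *v v) = norm v"
      using xs_le Av_le xs_proj closest_point_eq_if_norm_eq[OF X, of "A *v v"]
        abs_v norm_cabs_vec[of v] by auto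
    hence "cadj A *v xs = v"
      using cadj_mult_vec_eq_if_norm_eq[OF iso] by simp
    thus "cabs_vec (cadj A *v xs) = b" using abs_v by simp
  qed
qed

end
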